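(* Let $\lambda>0$ and let $(u_n)\subset E_\lambda$ satisfy $\Psi_\lambda(u_n)=c_\lambda+o_n(1)$ and $$\|v\|_\lambda-\|u_n\|_\lambda\ge\int_{\mathbb{R}^N}f(u_n)(v-u_n)\,dx-\tau_n\|v-u_n\|_\lambda\quad\text{for all } v\in E_\lambda,$$ where $\tau_n\to0$. Then $(u_n)$ is bounded in $E_\lambda$.
   Context: $N\ge2$, $1^*=N/(N-1)$. $f$ satisfies: $(f_1)$ $f\in C(\mathbb{R})$; $(f_2)$ $f(s)=o(1)$ as $s\to0$; $(f_3)$ $|f(s)|\le c_1+c_2|s|^{p-1}$ for some $c_1,c_2>0$, $p\in(1,1^* )$; $(f_4)$ there is $\theta>1$ with $0<\theta F(s)\le f(s)s$ for $s\ne0$, $F(s)=\int_0^sf$; $(f_5)$ $f$ increasing. $V:\mathbb{R}^N\to\mathbb{R}$ satisfies $V\ge0$, $|\{V\le M_0\}|<\infty$ for some $M_0>0$, and $\Omega=\mathrm{int}(V^{-1}(\{0\}))\ne\emptyset$. $E_\lambda=\{u\in BV(\mathbb{R}^N):\int(1+\lambda V)|u|<\infty\}$, $\|u\|_\lambda=\int_{\mathbb{R}^N}|Du|+\int_{\mathbb{R}^N}(1+\lambda V(x))|u|\,dx$, $\Psi_\lambda(u)=\|u\|_\lambda-\int_{\mathbb{R}^N}F(u)\,dx$. $c_\lambda=\inf_{\gamma\in\Gamma_\lambda}\max_{t\in[0,1]}\Psi_\lambda(\gamma(t))$, $\Gamma_\lambda=\{\gamma\in C([0,1],E_\lambda):\gamma(0)=0,\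 \Psi_\lambda(\gamma(1))<0\}$. *)

theory Defs
  imports "HOL-Analysis.Analysis"
begin

definition test_field :: "('a::euclidean_space \<Rightarrow> 'a) \<Rightarrow> ('a \<Rightarrow> 'a \<Rightarrow>\<^sub>L 'a) \<Rightarrow> bool" where
  "test_field \<phi> \<phi>' \<longleftrightarrow>
     (\<forall>x. (\<phi> has_derivative blinfun_apply (\<phi>' x)) (at x)) \<and>
     continuous_on UNIV \<phi>' \<and>
     compact (closure {x. \<phi> x \<noteq> 0}) \<and>
     (\<forall>x. norm (\<phi> x) \<le> 1)"

definition divergence :: "('a::euclidean_space \<Rightarrow> 'a \<Rightarrow>\<^sub>L 'a) \<Rightarrow> 'a \<Rightarrow> real" where
  "divergence \<phi>' x = (\<Sum>i\<in>Basis. (blinfun_apply (\<phi>' x) i) \<bullet> i)"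

definition total_variation :: "('a::euclidean_space \<Rightarrow> real) \<Rightarrow> ereal" where
  "total_variation u =
     (SUP \<phi>\<in>{(\<phi>, \<phi>'). test_field \<phi> \<phi>'}.
        ereal (\<integral>x. u x * divergence (snd \<phi>) x \<partial>lebesgue))"

definition BV :: "('a::euclidean_space \<Rightarrow> real) set" where
  "BV = {u. integrable lebesgue u \<and> total_variation u < \<infinity>}"

definition E_sp :: "('a::euclidean_space \<Rightarrow> real) \<Rightarrow> real \<Rightarrow> ('a \<Rightarrow> real) set" where
  "E_sp V lm = {u. u \<in> BV \<and> integrable lebesgue (\<lambda>x. (1 + lm * V x) * \<bar>u x\<bar>)}"

definition norm_E :: "('a::euclidean_space \<Rightarrow> real) \<Rightarrow> real \<Rightarrow> ('a \<Rightarrow> real) \<Rightarrow> real" where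
  "norm_E V lm u = real_of_ereal (total_variation u) + (\<integral>x. (1 + lm * V x) * \<bar>u x\<bar> \<partial>lebesgue)"

definition prim :: "(real \<Rightarrow> real) \<Rightarrow> real \<Rightarrow> real" where
  "prim f s = (LBINT t=0..s. f t)"

definition Psi :: "('a::euclidean_space \<Rightarrow> real) \<Rightarrow> real \<Rightarrow> (real \<Rightarrow> real) \<Rightarrow> ('a \<Rightarrow> real) \<Rightarrow> real" where
  "Psi V lm f u = norm_E V lm u - (\<integral>x. prim f (u x) \<partial>lebesgue)"

definition Gamma :: "('a::euclidean_space \<Rightarrow> real) \<Rightarrow> real \<Rightarrow> (real \<Rightarrow> real) \<Rightarrow> (real \<Rightarrow> 'a \<Rightarrow> real) set" where
  "Gamma V lm f = {\<gamma>.
     (\<forall>t\<in>{0..1}. \<gamma> t \<in> E_sp V lm) \<and>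
     (\<forall>t\<in>{0..1}. \<forall>\<epsilon>>0. \<exists>\<delta>>0. \<forall>s\<in>{0..1}. \<bar>s - t\<bar> < \<delta> \<longrightarrow>
         norm_E V lm (\<lambda>x. \<gamma> s x - \<gamma> t x) < \<epsilon>) \<and>
     (AE x in lebesgue. \<gamma> 0 x = 0) \<and>
     Psi V lm f (\<gamma> 1) < 0}"

definition mp_level :: "('a::euclidean_space \<Rightarrow> real) \<Rightarrow> real \<Rightarrow> (real \<Rightarrow> real) \<Rightarrow> 'a itself \<Rightarrow> real" where
  "mp_level V lm f _ = Inf ((\<lambda>\<gamma>. Sup ((\<lambda>t. Psi V lm f (\<gamma> t)) ` {0..1})) ` Gamma V lm f)"

end

theory Submission
  imports Defs
begin

text \<open>Testing the approximate criticality of \<open>u\<^sub>n\<close> with \<open>v = 2u\<^sub>n\<close> gives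
  \<open>\<integral>f(u\<^sub>n)u\<^sub>n \<le> (1 + \<tau>\<^sub>n)\<parallel>u\<^sub>n\<parallel>\<^sub>\<lambda>\<close>. The Ambrosetti--Rabinowitz condition \<open>\<theta>F(s) \<le> f(s)s\<close>
  then yields \<open>\<Psi>\<^sub>\<lambda>(u\<^sub>n) \<ge> (1 - (1 + \<tau>\<^sub>n)/\<theta>)\<parallel>u\<^sub>n\<parallel>\<^sub>\<lambda>\<close>, and the left-hand side is bounded
  above because it converges. Only \<open>(f\<^sub>4)\<close>, \<open>V \<ge> 0\<close> and \<open>\<lambda> > 0\<close> are needed.\<close>

lemma test_field_zero: "test_field (\<lambda>_. 0::'a::euclidean_space) (\<lambda>_. 0)"
  unfolding test_field_def by (auto simp: zero_blinfun.rep_eq)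

lemma test_field_uminus:
  assumes "test_field \<phi> \<phi>'"
  shows "test_field (\<lambda>x. - \<phi> x) (\<lambda>x. - \<phi>' x)"
proof -
  have "((\<lambda>x. - \<phi> x) has_derivative blinfun_apply (- \<phi>' x)) (at x)" for x
    using assms has_derivative_minus unfolding test_field_def uminus_blinfun.rep_eq by fastforce
  moreover have "{x. - \<phi> x \<noteq> 0} = {x. \<phi> x \<noteq> 0}" by auto
  ultimately show ?thesis
    using assms unfolding test_field_def by (auto intro: continuous_on_minus)
qed

lemma divergence_uminus: "divergence (\<lambda>x. - \<phi>' x) x = - divergence \<phi>' x"
  unfolding divergence_def by (simp add: uminus_blinfun.rep_eq sum_negf)

lemma total_variation_nonneg: "0 \<le> total_variation (u :: 'a::euclidean_space \<Rightarrow> real)"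
proof -
  have "ereal (\<integral>x. u x * divergence (\<lambda>_. 0::'a \<Rightarrow>\<^sub>L 'a) x \<partial>lebesgue) \<le> total_variation u"
    unfolding total_variation_def
    by (rule SUP_upper2[where i="(\<lambda>_. 0, \<lambda>_. 0)"]) (auto simp: test_field_zero)
  then show ?thesis by (simp add: divergence_def zero_ereal_def)
qed

lemma total_variation_uminus_le:
  "total_variation (\<lambda>x. - u x) \<le> total_variation (u :: 'a::euclidean_space \<Rightarrow> real)"
  unfolding total_variation_def
proof (rule SUP_least, clarify)
  fix \<phi> :: "'a \<Rightarrow> 'a" and \<phi>' :: "'a \<Rightarrow> 'a \<Rightarrow>\<^sub>L 'a"
  assume "test_field \<phi> \<phi>'"
  then have "ereal (\<integral>x. u x * divergence (\<lambda>x. - \<phi>' x) x \<partial>lebesgue)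
      \<le> (SUP p\<in>{(\<phi>, \<phi>'). test_field \<phi> \<phi>'}. ereal (\<integral>x. u x * divergence (snd p) x \<partial>lebesgue))"
    by (intro SUP_upper2[where i="(\<lambda>x. - \<phi> x, \<lambda>x. - \<phi>' x)"]) (auto intro: test_field_uminus)
  then show "ereal (\<integral>x. - u x * divergence (snd (\<phi>, \<phi>')) x \<partial>lebesgue)
      \<le> (SUP p\<in>{(\<phi>, \<phi>'). test_field \<phi> \<phi>'}. ereal (\<integral>x. u x * divergence (snd p) x \<partial>lebesgue))"
    by (simp add: divergence_uminus)
qed

lemma total_variation_uminus:
  "total_variation (\<lambda>x. - u x) = total_variation (u :: 'a::euclidean_space \<Rightarrow> real)"
  using total_variation_uminus_le[of u] total_variation_uminus_le[of "\<lambda>x. - u x"]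
  by (simp add: antisym)

lemma total_variation_cmult_nonneg:
  assumes "0 \<le> c"
  shows "total_variation (\<lambda>x. c * u x) = ereal c * total_variation (u :: 'a::euclidean_space \<Rightarrow> real)"
proof -
  let ?T = "{(\<phi>, \<phi>'). test_field \<phi> \<phi>'} :: (('a \<Rightarrow> 'a) \<times> ('a \<Rightarrow> 'a \<Rightarrow>\<^sub>L 'a)) set"
  have "?T \<noteq> {}"
    using test_field_zero by blast
  have "total_variation (\<lambda>x. c * u x)
      = (SUP p\<in>?T. ereal c * ereal (\<integral>x. u x * divergence (snd p) x \<partial>lebesgue))"
    unfolding total_variation_def by (simp add: mult.assoc)
  also have "\<dots> = ereal c * total_variation u"
    unfolding total_variation_def by (rule Sup_ereal_mult_left'[OF \<open>?T \<noteq> {}\<close> assms, symmetric])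
  finally show ?thesis .
qed

lemma total_variation_cmult:
  "total_variation (\<lambda>x. c * u x) = ereal \<bar>c\<bar> * total_variation (u :: 'a::euclidean_space \<Rightarrow> real)"
proof (cases "0 \<le> c")
  case False
  then have "(\<lambda>x. c * u x) = (\<lambda>x. \<bar>c\<bar> * - u x)" by auto
  then show ?thesis
    using total_variation_cmult_nonneg[of "\<bar>c\<bar>" "\<lambda>x. - u x"] by (simp add: total_variation_uminus)
qed (simp add: total_variation_cmult_nonneg)

lemma norm_E_cmult: "norm_E V lm (\<lambda>x. c * u x) = \<bar>c\<bar> * norm_E V lm u"
proof -
  have "(\<lambda>x. (1 + lm * V x) * \<bar>c * u x\<bar>) = (\<lambda>x. \<bar>c\<bar> * ((1 + lm * V x) * \<bar>u x\<bar>))"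
    by (auto simp: abs_mult)
  then show ?thesis
    unfolding norm_E_def total_variation_cmult by (simp add: distrib_left)
qed

lemma norm_E_nonneg:
  assumes "\<And>x. 0 \<le> V x" and "0 \<le> lm"
  shows "0 \<le> norm_E V lm u"
proof -
  have "0 \<le> real_of_ereal (total_variation u)"
    using total_variation_nonneg[of u] by (simp add: real_of_ereal_pos)
  moreover have "0 \<le> (\<integral>x. (1 + lm * V x) * \<bar>u x\<bar> \<partial>lebesgue)"
    using assms by (intro integral_nonneg_AE) auto
  ultimately show ?thesis unfolding norm_E_def by simp
qed

lemma E_sp_cmult:
  assumes "u \<in> E_sp V lm"
  shows "(\<lambda>x. c * u x) \<in> E_sp V lm"
proof -
  have "(\<lambda>x. (1 + lm * V x) * \<bar>c * u x\<bar>) = (\<lambda>x. \<bar>c\<bar> * ((1 + lm * V x) * \<bar>u x\<bar>))"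
    by (auto simp: abs_mult)
  moreover have "total_variation u < \<infinity>"
    using assms unfolding E_sp_def BV_def by auto
  then have "total_variation (\<lambda>x. c * u x) < \<infinity>"
    using total_variation_nonneg[of u]
    by (cases "total_variation u") (auto simp: total_variation_cmult)
  ultimately show ?thesis
    using assms unfolding E_sp_def BV_def by auto
qed

definition approx_critical :: "('a::euclidean_space \<Rightarrow> real) \<Rightarrow> real \<Rightarrow> (real \<Rightarrow> real) \<Rightarrow> real \<Rightarrow> ('a \<Rightarrow> real) \<Rightarrow> bool" where
  "approx_critical V lm f t u \<longleftrightarrow> (\<forall>v\<in>E_sp V lm.
     norm_E V lm v - norm_E V lm u \<ge>
     (\<integral>x. f (u x) * (v x - u x) \<partial>lebesgue) - t * norm_E V lm (\<lambda>x. v x - u x))"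

lemma approx_criticalD:
  assumes "approx_critical V lm f t u" and "v \<in> E_sp V lm"
  shows "norm_E V lm v - norm_E V lm u \<ge>
    (\<integral>x. f (u x) * (v x - u x) \<partial>lebesgue) - t * norm_E V lm (\<lambda>x. v x - u x)"
  using assms unfolding approx_critical_def by blast

lemma approx_critical_integral_le:
  assumes "approx_critical V lm f t u" and "u \<in> E_sp V lm"
  shows "(\<integral>x. f (u x) * u x \<partial>lebesgue) \<le> (1 + t) * norm_E V lm u"
proof -
  have "norm_E V lm (\<lambda>x. 2 * u x) - norm_E V lm u \<ge>
      (\<integral>x. f (u x) * (2 * u x - u x) \<partial>lebesgue) - t * norm_E V lm (\<lambda>x. 2 * u x - u x)"
    by (rule approx_criticalD[OF assms(1) E_sp_cmult[OF assms(2)]])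
  moreover have "norm_E V lm (\<lambda>x. 2 * u x) = 2 * norm_E V lm u"
    using norm_E_cmult[of V lm 2 u] by simp
  ultimately show ?thesis by (simp add: algebra_simps)
qed

text \<open>If \<open>f(u)u\<close> is not integrable, its Bochner integral is the junk value \<open>0\<close>;
  testing with \<open>v = 0\<close> then forces \<open>u\<close> to vanish in \<open>E\<^sub>\<lambda>\<close>.\<close>
lemma approx_critical_non_integrable:
  assumes "approx_critical V lm f t u" and "u \<in> E_sp V lm" and "t < 1"
    and "\<And>x. 0 \<le> V x" and "0 \<le> lm"
    and "\<not> integrable lebesgue (\<lambda>x. f (u x) * u x)"
  shows "norm_E V lm u = 0"
proof -
  have "norm_E V lm (\<lambda>x. 0 * u x) - norm_E V lm u \<ge>
      (\<integral>x. f (u x) * (0 * u x - u x) \<partial>lebesgue) - t * norm_E V lm (\<lambda>x. 0 * u x - u x)"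
    by (rule approx_criticalD[OF assms(1) E_sp_cmult[OF assms(2)]])
  moreover have "\<not> integrable lebesgue (\<lambda>x. f (u x) * (0 * u x - u x))"
    using assms(6) integrable_minus by fastforce
  moreover have "norm_E V lm (\<lambda>x. 0 * u x) = 0"
    using norm_E_cmult[of V lm 0 u] by simp
  moreover have "norm_E V lm (\<lambda>x. 0 * u x - u x) = norm_E V lm u"
    using norm_E_cmult[of V lm "-1" u] by simp
  ultimately have "(1 - t) * norm_E V lm u \<le> 0"
    by (simp add: not_integrable_integral_eq algebra_simps)
  then show ?thesis
    using assms(3-5) norm_E_nonneg[of V lm u] by (simp add: mult_le_0_iff)
qed

lemma integral_prim_le:
  assumes "0 < \<theta>" and F_nonneg: "\<And>s. 0 \<le> prim f s" and AR: "\<And>s. \<theta> * prim f s \<le> f s * s"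
    and "integrable lebesgue (\<lambda>x. f (u x) * u x)"
  shows "\<theta> * (\<integral>x. prim f (u x) \<partial>lebesgue) \<le> (\<integral>x. f (u x) * u x \<partial>lebesgue)"
proof (cases "integrable lebesgue (\<lambda>x. prim f (u x))")
  case True
  have "\<theta> * (\<integral>x. prim f (u x) \<partial>lebesgue) = (\<integral>x. \<theta> * prim f (u x) \<partial>lebesgue)"
    by simp
  also have "\<dots> \<le> (\<integral>x. f (u x) * u x \<partial>lebesgue)"
    using True assms(4) AR by (intro integral_mono) auto
  finally show ?thesis .
next
  case False
  have "0 \<le> f s * s" for s
    using AR[of s] F_nonneg[of s] \<open>0 < \<theta>\<close> by (meson order.trans mult_nonneg_nonneg less_imp_le)
  then show ?thesis
    using False by (simp add: not_integrable_integral_eq integral_nonneg_AE)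
qed

lemma approx_critical_norm_E_le_Psi:
  assumes "approx_critical V lm f t u" and "u \<in> E_sp V lm" and "t < 1"
    and "\<And>x. 0 \<le> V x" and "0 \<le> lm"
    and "1 < \<theta>" and "\<And>s. 0 \<le> prim f s" and "\<And>s. \<theta> * prim f s \<le> f s * s"
  shows "(1 - (1 + t) / \<theta>) * norm_E V lm u \<le> max 0 (Psi V lm f u)"
proof (cases "integrable lebesgue (\<lambda>x. f (u x) * u x)")
  case True
  have "\<theta> * (\<integral>x. prim f (u x) \<partial>lebesgue) \<le> (\<integral>x. f (u x) * u x \<partial>lebesgue)"
    using assms(6-8) True by (intro integral_prim_le) auto
  also have "\<dots> \<le> (1 + t) * norm_E V lm u"
    by (rule approx_critical_integral_le[OF assms(1,2)])
  finally have "(1 - (1 + t) / \<theta>) * norm_E V lm u \<le> Psi V lm f u"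
    using \<open>1 < \<theta>\<close> unfolding Psi_def by (simp add: field_simps)
  then show ?thesis by linarith
next
  case False
  then show ?thesis
    using approx_critical_non_integrable[OF assms(1-5)] by simp
qed

lemma approx_critical_sequence_Bseq:
  assumes "\<And>x. 0 \<le> V x" and "0 \<le> lm"
    and "1 < \<theta>" and "\<And>s. 0 \<le> prim f s" and "\<And>s. \<theta> * prim f s \<le> f s * s"
    and "\<And>n. u n \<in> E_sp V lm" and "\<And>n. approx_critical V lm f (\<tau> n) (u n)"
    and "\<tau> \<longlonglongrightarrow> 0" and "eventually (\<lambda>n. Psi V lm f (u n) \<le> M) sequentially"
  shows "Bseq (\<lambda>n. norm_E V lm (u n))"
proof -
  define \<delta> where "\<delta> = min (1/2) ((\<theta> - 1) / 2)"
  define \<kappa> where "\<kappa> = 1 - (1 + \<delta>) / \<theta>"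
  have "0 < \<delta>" "\<delta> < 1" "0 < \<kappa>"
    using \<open>1 < \<theta>\<close> unfolding \<kappa>_def \<delta>_def by (auto simp: field_simps min_def)
  have "eventually (\<lambda>n. \<tau> n < \<delta>) sequentially"
    using order_tendstoD(2)[OF assms(8) \<open>0 < \<delta>\<close>] .
  with assms(9) have "eventually (\<lambda>n. norm (norm_E V lm (u n)) \<le> norm (max 0 M / \<kappa>)) sequentially"
  proof eventually_elim
    case (elim n)
    have "\<kappa> * norm_E V lm (u n) \<le> (1 - (1 + \<tau> n) / \<theta>) * norm_E V lm (u n)"
      using elim(2) \<open>1 < \<theta>\<close> norm_E_nonneg[of V lm "u n"] assms(1,2)
      unfolding \<kappa>_def by (intro mult_right_mono) (auto simp: divide_right_mono)
    also have "\<dots> \<le> max 0 (Psi V lm f (u n))"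
      using assms \<open>\<delta> < 1\<close> elim(2) by (intro approx_critical_norm_E_le_Psi) auto
    also have "\<dots> \<le> max 0 M"
      using elim(1) by linarith
    finally show ?case
      using \<open>0 < \<kappa>\<close> norm_E_nonneg[of V lm "u n"] assms(1,2) by (simp add: field_simps)
  qed
  then show ?thesis
    by (rule Bseq_eventually_mono) (auto simp: Bseq_def)
qed

theorem lemma3p3:
  fixes V :: "'a::euclidean_space \<Rightarrow> real"
    and f :: "real \<Rightarrow> real"
    and lm :: real
    and u :: "nat \<Rightarrow> 'a \<Rightarrow> real"
    and \<tau> :: "nat \<Rightarrow> real"
  assumes dim: "DIM('a) \<ge> 2"
    and f1: "continuous_on UNIV f"
    and f2: "(f \<longlongrightarrow> 0) (at 0)"
    and f3: "\<exists>c1>0. \<exists>c2>0. \<exists>p. 1 < p \<and> p < real DIM('a) / (real DIM('a) - 1) \<and>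
               (\<forall>s. \<bar>f s\<bar> \<le> c1 + c2 * \<bar>s\<bar> powr (p - 1))"
    and f4: "\<exists>\<theta>>1. \<forall>s. s \<noteq> 0 \<longrightarrow> 0 < \<theta> * prim f s \<and> \<theta> * prim f s \<le> f s * s"
    and f5: "strict_mono f"
    and V_meas: "V \<in> borel_measurable lebesgue"
    and V_nonneg: "\<forall>x. V x \<ge> 0"
    and V_level: "\<exists>M0>0. emeasure lebesgue {x. V x \<le> M0} < \<infinity>"
    and V_zero: "interior (V -` {0}) \<noteq> {}"
    and lam: "lm > 0"
    and uE: "\<forall>n. u n \<in> E_sp V lm"
    and PsiLim: "(\<lambda>n. Psi V lm f (u n)) \<longlonglongrightarrow> mp_level V lm f TYPE('a)"
    and tau: "\<tau> \<longlonglongrightarrow> 0"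
    and PS: "\<forall>n. \<forall>v\<in>E_sp V lm.
               norm_E V lm v - norm_E V lm (u n) \<ge>
               (\<integral>x. f (u n x) * (v x - u n x) \<partial>lebesgue)
               - \<tau> n * norm_E V lm (\<lambda>x. v x - u n x)"
  shows "\<exists>C. \<forall>n. norm_E V lm (u n) \<le> C"
proof -
  obtain \<theta> where "1 < \<theta>" and \<theta>: "\<And>s. s \<noteq> 0 \<Longrightarrow> 0 < \<theta> * prim f s \<and> \<theta> * prim f s \<le> f s * s"
    using f4 by blast
  have "prim f 0 = 0"
    by (simp add: prim_def zero_ereal_def)
  then have F_nonneg: "0 \<le> prim f s" and AR: "\<theta> * prim f s \<le> f s * s" for s
    using \<theta>[of s] \<open>1 < \<theta>\<close> by (cases "s = 0"; auto simp: zero_less_mult_iff)+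
  have "eventually (\<lambda>n. Psi V lm f (u n) \<le> mp_level V lm f TYPE('a) + 1) sequentially"
    using order_tendstoD(2)[OF PsiLim, of "mp_level V lm f TYPE('a) + 1"]
    by (auto elim: eventually_mono)
  moreover have "approx_critical V lm f (\<tau> n) (u n)" for n
    using PS unfolding approx_critical_def by blast
  ultimately have "Bseq (\<lambda>n. norm_E V lm (u n))"
    using V_nonneg lam \<open>1 < \<theta>\<close> F_nonneg AR uE tau
    by (intro approx_critical_sequence_Bseq) auto
  then show ?thesis
    unfolding Bseq_def using abs_le_D1 by auto
qed

end
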